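(* Let $S_X,S_Y$ be finite nonempty action sets, $\lambda\in[0,1)$, and let $\varphi(s_X,s_Y)=\phi_X(s_X)+\phi_Y(s_Y)$ be additive. Let $\tau_X^+,\tau_X^-\in\Delta(S_X)$ satisfy $$\min_{s_Y}\varphi(\tau_X^+,s_Y)\ge(1-\lambda)\max_{s_Y}\varphi(\tau_X^+,s_Y)+\lambda\max_{s_Y}\varphi(\tau_X^-,s_Y),$$ $$\max_{s_Y}\varphi(\tau_X^-,s_Y)\le\lambda\min_{s_Y}\varphi(\tau_X^+,s_Y)+(1-\lambda)\min_{s_Y}\varphi(\tau_X^-,s_Y).$$ Then for every $K\in\big[\phi_X(\tau_X^-)+\max_{s_Y}\phi_Y(s_Y),\ \phi_X(\tau_X^+)+\min_{s_Y}\phi_Y(s_Y)\big]$ there exist $p_0\in[0,1]$ and $p^*:S_Y\to[0,1]$ such that the two-point reactive strategy which plays $p_0\tau_X^++(1-p_0)\tau_X^-$ in round $0$ and $\sigma_X^*[s_Y]=p^*[s_Y]\tau_X^++(1-p^*[s_Y])\tau_X^-$ in round $t+1$ after $Y$ played $s_Y$ in round $t$ enforces $\varphi\equiv K$, i.e., is $(\varphi-K,\lambda)$-autocratic.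
   Context: Two players $X,Y$ play a repeated game with finite action sets $S_X,S_Y$; $\Delta(S)$ denotes the probability distributions on $S$. Additive means $\phi_X:S_X\to\mathbb{R}$, $\phi_Y:S_Y\to\mathbb{R}$ with $\varphi(s_X,s_Y)=\phi_X(s_X)+\phi_Y(s_Y)$; $\phi_X(\tau_X)=\mathbb{E}_{s_X\sim\tau_X}[\phi_X(s_X)]$ and $\varphi(\tau_X,s_Y)=\mathbb{E}_{s_X\sim\tau_X}[\varphi(s_X,s_Y)]$; maxima/minima over $s_Y$ are over $S_Y$. Histories: $\mathcal{H}=\bigcup_{T\ge0}(S_X\times S_Y)^T$; behavioral strategies are maps $\sigma:\mathcal{H}\to\Delta(S)$; players independently draw actions each round from their strategies evaluated at the history of realized action pairs, with $\mathbb{E}_{\sigma_X,\sigma_Y}$ the expectation over the resulting play. For $f:S_X\times S_Y\to\mathbb{R}$, $\sigma_X$ is $(f,\lambda)$-autocratic if for every behavioral strategy $\sigma_Y$ of $Y$, $\mathbb{E}_{\sigma_X,\sigma_Y}[(1-\lambda)\sum_{t\ge0}\lambda^tf(s_X^t,s_Y^t)]=0$. *)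

theory Defs
  imports "HOL-Probability.Probability"
begin

text \<open>Histories are lists of realized action pairs (oldest first); behavioral
strategies map histories to distributions over own actions.\<close>

type_synonym ('x, 'y) history = "('x \<times> 'y) list"

definition mix :: "real \<Rightarrow> 'a pmf \<Rightarrow> 'a pmf \<Rightarrow> 'a pmf" where
  "mix p \<tau>1 \<tau>2 = bind_pmf (bernoulli_pmf p) (\<lambda>b. if b then \<tau>1 else \<tau>2)"

fun hist_dist :: "(('x, 'y) history \<Rightarrow> 'x pmf) \<Rightarrow> (('x, 'y) history \<Rightarrow> 'y pmf)
    \<Rightarrow> nat \<Rightarrow> ('x, 'y) history pmf" where
  "hist_dist \<sigma>X \<sigma>Y 0 = return_pmf []"
| "hist_dist \<sigma>X \<sigma>Y (Suc t) =
     bind_pmf (hist_dist \<sigma>X \<sigma>Y t) (\<lambda>h.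
       bind_pmf (\<sigma>X h) (\<lambda>x. bind_pmf (\<sigma>Y h) (\<lambda>y. return_pmf (h @ [(x, y)]))))"

definition round_exp :: "('x \<Rightarrow> 'y \<Rightarrow> real) \<Rightarrow> (('x, 'y) history \<Rightarrow> 'x pmf)
    \<Rightarrow> (('x, 'y) history \<Rightarrow> 'y pmf) \<Rightarrow> nat \<Rightarrow> real" where
  "round_exp f \<sigma>X \<sigma>Y t =
     measure_pmf.expectation (hist_dist \<sigma>X \<sigma>Y t) (\<lambda>h.
       measure_pmf.expectation (\<sigma>X h) (\<lambda>x.
         measure_pmf.expectation (\<sigma>Y h) (\<lambda>y. f x y)))"

text \<open>Expected normalized discounted payoff
  E[(1-lambda) sum_t lambda^t f(s^t)] (f bounded, so the expectation of the sum
  is the sum of the per-round expectations).\<close>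
definition disc_payoff :: "('x \<Rightarrow> 'y \<Rightarrow> real) \<Rightarrow> real \<Rightarrow> (('x, 'y) history \<Rightarrow> 'x pmf)
    \<Rightarrow> (('x, 'y) history \<Rightarrow> 'y pmf) \<Rightarrow> real" where
  "disc_payoff f lam \<sigma>X \<sigma>Y = (1 - lam) * (\<Sum>t. lam ^ t * round_exp f \<sigma>X \<sigma>Y t)"

definition autocratic :: "('x \<Rightarrow> 'y \<Rightarrow> real) \<Rightarrow> real \<Rightarrow> (('x, 'y) history \<Rightarrow> 'x pmf) \<Rightarrow> bool" where
  "autocratic f lam \<sigma>X \<longleftrightarrow> (\<forall>\<sigma>Y :: ('x, 'y) history \<Rightarrow> 'y pmf. disc_payoff f lam \<sigma>X \<sigma>Y = 0)"

definition reactive :: "real \<Rightarrow> ('y \<Rightarrow> real) \<Rightarrow> 'x pmf \<Rightarrow> 'x pmf \<Rightarrow> ('x, 'y) history \<Rightarrow> 'x pmf" where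
  "reactive p0 pstar \<tau>p \<tau>m h =
     (if h = [] then mix p0 \<tau>p \<tau>m else mix (pstar (snd (last h))) \<tau>p \<tau>m)"

definition phi_mixed :: "('x \<Rightarrow> real) \<Rightarrow> ('y \<Rightarrow> real) \<Rightarrow> 'x pmf \<Rightarrow> 'y \<Rightarrow> real" where
  "phi_mixed \<phi>X \<phi>Y \<tau> y = measure_pmf.expectation \<tau> (\<lambda>x. \<phi>X x + \<phi>Y y)"

end

(*
  Let u_t and v_t be the expected values of phi_X and phi_Y under the mixed actions of X and Y
  in round t. If X reacts to every action y with a mixture whose phi_X-expectation w satisfies
  lam * w + phi_Y y = L, then lam * u_(t+1) + v_t = L whatever Y does, so the discounted sum of
  u_t + v_t - K telescopes to u_0 + (L - K) / (1 - lam); an opening mixture with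
  (1 - lam) * u_0 + L = K makes it vanish. Mixtures of tau+ and tau- realise every phi_X-expectation
  between those of tau- and tau+, and the hypotheses on the extreme payoffs and on K leave room
  for a level L for which all the required reactions and the opening move are such mixtures.
*)
theory Submission
  imports Defs
begin

lemma expectation_bind_pmf:
  fixes f :: "'b \<Rightarrow> real"
  assumes "finite (set_pmf M)" and "\<And>x. x \<in> set_pmf M \<Longrightarrow> finite (set_pmf (N x))"
  shows "measure_pmf.expectation (bind_pmf M N) f =
         measure_pmf.expectation M (\<lambda>x. measure_pmf.expectation (N x) f)"
proof -
  have "measure_pmf.expectation (bind_pmf M N) f =
        (\<Sum>x\<in>set_pmf M. pmf M x * measure_pmf.expectation (N x) f)"
    using pmf_expectation_bind[of "set_pmf M" N M f] assms by simp
  also have "\<dots> = measure_pmf.expectation M (\<lambda>x. measure_pmf.expectation (N x) f)"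
    by (subst integral_measure_pmf[OF assms(1)]) auto
  finally show ?thesis .
qed

lemma finite_set_pmf_hist_dist:
  fixes \<sigma>X :: "('x::finite, 'y::finite) history \<Rightarrow> 'x pmf"
  shows "finite (set_pmf (hist_dist \<sigma>X \<sigma>Y t))"
proof -
  have "set_pmf (hist_dist \<sigma>X \<sigma>Y t) \<subseteq> {h. set h \<subseteq> UNIV \<and> length h = t}"
    by (induction t) auto
  then show ?thesis
    by (rule finite_subset) (intro finite_lists_length_eq finite)
qed

lemma expectation_hist_dist_Suc:
  fixes \<sigma>X :: "('x::finite, 'y::finite) history \<Rightarrow> 'x pmf" and g :: "('x, 'y) history \<Rightarrow> real"
  shows "measure_pmf.expectation (hist_dist \<sigma>X \<sigma>Y (Suc t)) g =
         measure_pmf.expectation (hist_dist \<sigma>X \<sigma>Y t) (\<lambda>h.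
           measure_pmf.expectation (\<sigma>X h) (\<lambda>x.
             measure_pmf.expectation (\<sigma>Y h) (\<lambda>y. g (h @ [(x, y)]))))"
  by (simp add: expectation_bind_pmf finite_set_pmf_hist_dist)

lemma expectation_mix:
  fixes f :: "'a::finite \<Rightarrow> real"
  assumes "0 \<le> p" and "p \<le> 1"
  shows "measure_pmf.expectation (mix p \<tau>1 \<tau>2) f =
         p * measure_pmf.expectation \<tau>1 f + (1 - p) * measure_pmf.expectation \<tau>2 f"
  using assms by (simp add: mix_def expectation_bind_pmf)

lemma abs_expectation_le:
  fixes f :: "'a \<Rightarrow> real"
  assumes "integrable (measure_pmf M) f" and "\<And>x. \<bar>f x\<bar> \<le> B"
  shows "\<bar>measure_pmf.expectation M f\<bar> \<le> B"
proof -
  have "measure_pmf.expectation M (\<lambda>x. \<bar>f x\<bar>) \<le> B"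
    by (rule measure_pmf.integral_le_const) (use assms in auto)
  then show ?thesis
    using integral_abs_bound[of M f] by linarith
qed

lemma ex_mix_expectation_eq:
  fixes f :: "'a::finite \<Rightarrow> real"
  assumes "measure_pmf.expectation \<tau>2 f \<le> v" and "v \<le> measure_pmf.expectation \<tau>1 f"
  shows "\<exists>p\<in>{0..1}. measure_pmf.expectation (mix p \<tau>1 \<tau>2) f = v"
proof -
  define a where "a = measure_pmf.expectation \<tau>1 f"
  define b where "b = measure_pmf.expectation \<tau>2 f"
  define p where "p = (if a = b then 0 else (v - b) / (a - b))"
  have "p \<in> {0..1}" and "p * a + (1 - p) * b = v"
    using assms by (auto simp: p_def a_def b_def field_simps)
  then show ?thesis
    by (auto simp: expectation_mix a_def b_def)
qed

lemma ex_mix_scaled_expectation_eq: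
  fixes f :: "'a::finite \<Rightarrow> real"
  assumes "0 \<le> s" and "s * measure_pmf.expectation \<tau>2 f \<le> c"
    and "c \<le> s * measure_pmf.expectation \<tau>1 f"
  shows "\<exists>p\<in>{0..1}. s * measure_pmf.expectation (mix p \<tau>1 \<tau>2) f = c"
proof (cases "s = 0")
  case True
  then show ?thesis using assms by auto
next
  case False
  with assms have "measure_pmf.expectation \<tau>2 f \<le> c / s" "c / s \<le> measure_pmf.expectation \<tau>1 f"
    by (auto simp: field_simps)
  then obtain p where "p \<in> {0..1}" and "measure_pmf.expectation (mix p \<tau>1 \<tau>2) f = c / s"
    using ex_mix_expectation_eq by blast
  with False show ?thesis
    by (intro bexI[of _ p]) auto
qed

lemma sums_discounted_telescoping:
  fixes U V :: "nat \<Rightarrow> real"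
  assumes "0 \<le> lam" and "lam < 1" and "\<And>t. \<bar>U t\<bar> \<le> B"
    and "\<And>t. lam * U (Suc t) + V t = L"
  shows "(\<lambda>t. lam ^ t * (U t + V t - K)) sums (U 0 + (L - K) / (1 - lam))"
proof -
  have "(\<lambda>t. lam ^ t * U t) \<longlonglongrightarrow> 0"
  proof (rule Lim_null_comparison)
    show "\<forall>\<^sub>F t in sequentially. norm (lam ^ t * U t) \<le> lam ^ t * B"
      using assms(1,3) by (intro always_eventually allI) (simp add: abs_mult mult_left_mono)
    show "(\<lambda>t. lam ^ t * B) \<longlonglongrightarrow> 0"
      by (intro tendsto_mult_left_zero LIMSEQ_power_zero) (use assms(1,2) in auto)
  qed
  then have "(\<lambda>t. lam ^ t * U t - lam ^ Suc t * U (Suc t)) sums U 0"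
    using telescope_sums' by fastforce
  moreover have "(\<lambda>t. lam ^ t * (L - K)) sums ((L - K) / (1 - lam))"
    using sums_mult2[OF geometric_sums[of lam], of "L - K"] assms(1,2) by simp
  ultimately have "(\<lambda>t. (lam ^ t * U t - lam ^ Suc t * U (Suc t)) + lam ^ t * (L - K)) sums
      (U 0 + (L - K) / (1 - lam))"
    by (rule sums_add)
  moreover have "lam ^ t * (U t + V t - K) = (lam ^ t * U t - lam ^ Suc t * U (Suc t)) + lam ^ t * (L - K)"
    for t
    using assms(4)[of t] by (auto simp: algebra_simps)
  ultimately show ?thesis
    by simp
qed

lemma autocratic_additiveI:
  fixes \<phi>X :: "'x::finite \<Rightarrow> real" and \<phi>Y :: "'y::finite \<Rightarrow> real"
    and \<sigma>X :: "('x, 'y) history \<Rightarrow> 'x pmf"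
  assumes "0 \<le> lam" and "lam < 1"
    and "(1 - lam) * measure_pmf.expectation (\<sigma>X []) \<phi>X + L = K"
    and "\<And>h x y. lam * measure_pmf.expectation (\<sigma>X (h @ [(x, y)])) \<phi>X + \<phi>Y y = L"
  shows "autocratic (\<lambda>x y. \<phi>X x + \<phi>Y y - K) lam \<sigma>X"
  unfolding autocratic_def
proof
  fix \<sigma>Y :: "('x, 'y) history \<Rightarrow> 'y pmf"
  define U where "U t = measure_pmf.expectation (hist_dist \<sigma>X \<sigma>Y t)
      (\<lambda>h. measure_pmf.expectation (\<sigma>X h) \<phi>X)" for t
  define V where "V t = measure_pmf.expectation (hist_dist \<sigma>X \<sigma>Y t)
      (\<lambda>h. measure_pmf.expectation (\<sigma>Y h) \<phi>Y)" for t
  note finite_support = integrable_measure_pmf_finite finite_set_pmf_hist_dist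
  have round: "round_exp (\<lambda>x y. \<phi>X x + \<phi>Y y - K) \<sigma>X \<sigma>Y t = U t + V t - K" for t
    by (simp add: round_exp_def U_def V_def finite_support)
  have step: "lam * U (Suc t) + V t = L" for t
  proof -
    have "lam * U (Suc t) + V t = measure_pmf.expectation (hist_dist \<sigma>X \<sigma>Y t) (\<lambda>h.
        measure_pmf.expectation (\<sigma>X h) (\<lambda>x. measure_pmf.expectation (\<sigma>Y h) (\<lambda>y.
          lam * measure_pmf.expectation (\<sigma>X (h @ [(x, y)])) \<phi>X + \<phi>Y y)))"
      unfolding U_def V_def expectation_hist_dist_Suc by (simp add: finite_support)
    also have "\<dots> = L"
      by (simp add: assms(4))
    finally show ?thesis .
  qed
  have U_bound: "\<bar>U t\<bar> \<le> Max (range (\<lambda>x. \<bar>\<phi>X x\<bar>))" for t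
    unfolding U_def
    by (intro abs_expectation_le) (auto simp: finite_support)
  from sums_discounted_telescoping[where U = U and V = V, OF assms(1,2) U_bound step]
  have discounted_sum: "(\<Sum>t. lam ^ t * round_exp (\<lambda>x y. \<phi>X x + \<phi>Y y - K) \<sigma>X \<sigma>Y t) =
      measure_pmf.expectation (\<sigma>X []) \<phi>X + (L - K) / (1 - lam)"
    by (simp add: round U_def sums_iff)
  show "disc_payoff (\<lambda>x y. \<phi>X x + \<phi>Y y - K) lam \<sigma>X \<sigma>Y = 0"
    unfolding disc_payoff_def discounted_sum using assms(2,3) by (simp add: field_simps)
qed

lemma phi_mixed_eq:
  fixes \<phi>X :: "'x::finite \<Rightarrow> real"
  shows "phi_mixed \<phi>X \<phi>Y \<tau> = (\<lambda>y. \<phi>Y y + measure_pmf.expectation \<tau> \<phi>X)"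
  by (auto simp: phi_mixed_def integrable_measure_pmf_finite)

lemma ex_level_between:
  fixes lam a b my My K :: real
  assumes "lam < 1" and "lam * b + My \<le> lam * a + my" and "my \<le> My"
    and "b + My \<le> K" and "K \<le> a + my"
  shows "\<exists>L. lam * b + My \<le> L \<and> L \<le> lam * a + my \<and>
             (1 - lam) * b \<le> K - L \<and> K - L \<le> (1 - lam) * a"
proof -
  from assms have "(1 - lam) * b \<le> (1 - lam) * a"
    by (intro mult_left_mono) auto
  with assms show ?thesis
    by (intro exI[of _ "max (lam * b + My) (K - (1 - lam) * a)"]) (auto simp: algebra_simps)
qed

lemma ex_reactive_mix_weights:
  fixes \<phi>X :: "'x::finite \<Rightarrow> real" and \<phi>Y :: "'y::finite \<Rightarrow> real"
  assumes "0 \<le> lam" and "lam < 1"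
    and "lam * measure_pmf.expectation \<tau>m \<phi>X + Max (range \<phi>Y) \<le>
         lam * measure_pmf.expectation \<tau>p \<phi>X + Min (range \<phi>Y)"
    and "measure_pmf.expectation \<tau>m \<phi>X + Max (range \<phi>Y) \<le> K"
    and "K \<le> measure_pmf.expectation \<tau>p \<phi>X + Min (range \<phi>Y)"
  shows "\<exists>p0 pstar L. p0 \<in> {0..1} \<and> (\<forall>y. pstar y \<in> {0..1}) \<and>
           (1 - lam) * measure_pmf.expectation (mix p0 \<tau>p \<tau>m) \<phi>X + L = K \<and>
           (\<forall>y. lam * measure_pmf.expectation (mix (pstar y) \<tau>p \<tau>m) \<phi>X + \<phi>Y y = L)"
proof -
  have \<phi>Y_bounds: "Min (range \<phi>Y) \<le> \<phi>Y y" "\<phi>Y y \<le> Max (range \<phi>Y)" for y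
    by simp_all
  then have "Min (range \<phi>Y) \<le> Max (range \<phi>Y)"
    by (meson order_trans)
  with assms obtain L where L: "lam * measure_pmf.expectation \<tau>m \<phi>X + Max (range \<phi>Y) \<le> L"
      "L \<le> lam * measure_pmf.expectation \<tau>p \<phi>X + Min (range \<phi>Y)"
    and K_minus_L: "(1 - lam) * measure_pmf.expectation \<tau>m \<phi>X \<le> K - L"
      "K - L \<le> (1 - lam) * measure_pmf.expectation \<tau>p \<phi>X"
    using ex_level_between[of lam "measure_pmf.expectation \<tau>m \<phi>X" "Max (range \<phi>Y)"
        "measure_pmf.expectation \<tau>p \<phi>X" "Min (range \<phi>Y)" K] by auto
  obtain p0 where "p0 \<in> {0..1}" and "(1 - lam) * measure_pmf.expectation (mix p0 \<tau>p \<tau>m) \<phi>X = K - L"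
    using ex_mix_scaled_expectation_eq[of "1 - lam" \<tau>m \<phi>X "K - L" \<tau>p] K_minus_L assms(2) by auto
  moreover have "\<exists>p\<in>{0..1}. lam * measure_pmf.expectation (mix p \<tau>p \<tau>m) \<phi>X = L - \<phi>Y y" for y
  proof -
    have "lam * measure_pmf.expectation \<tau>m \<phi>X \<le> L - \<phi>Y y"
      and "L - \<phi>Y y \<le> lam * measure_pmf.expectation \<tau>p \<phi>X"
      using L \<phi>Y_bounds[of y] by linarith+
    then show ?thesis
      using ex_mix_scaled_expectation_eq[of lam \<tau>m \<phi>X "L - \<phi>Y y" \<tau>p] assms(1) by auto
  qed
  then obtain pstar where "\<And>y. pstar y \<in> {0..1}"
    and "\<And>y. lam * measure_pmf.expectation (mix (pstar y) \<tau>p \<tau>m) \<phi>X = L - \<phi>Y y"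
    by metis
  ultimately show ?thesis
    by (intro exI[of _ p0] exI[of _ pstar] exI[of _ L]) auto
qed

theorem lemma3:
  fixes \<phi>X :: "'x::finite \<Rightarrow> real" and \<phi>Y :: "'y::finite \<Rightarrow> real"
    and lam K :: real and \<tau>p \<tau>m :: "'x pmf"
  assumes "0 \<le> lam" and "lam < 1"
    and "Min (range (phi_mixed \<phi>X \<phi>Y \<tau>p)) \<ge>
           (1 - lam) * Max (range (phi_mixed \<phi>X \<phi>Y \<tau>p)) + lam * Max (range (phi_mixed \<phi>X \<phi>Y \<tau>m))"
    and "Max (range (phi_mixed \<phi>X \<phi>Y \<tau>m)) \<le>
           lam * Min (range (phi_mixed \<phi>X \<phi>Y \<tau>p)) + (1 - lam) * Min (range (phi_mixed \<phi>X \<phi>Y \<tau>m))"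
    and "measure_pmf.expectation \<tau>m \<phi>X + Max (range \<phi>Y) \<le> K"
    and "K \<le> measure_pmf.expectation \<tau>p \<phi>X + Min (range \<phi>Y)"
  shows "\<exists>p0 pstar. p0 \<in> {0..1} \<and> (\<forall>y. pstar y \<in> {0..1}) \<and>
           autocratic (\<lambda>x y. \<phi>X x + \<phi>Y y - K) lam (reactive p0 pstar \<tau>p \<tau>m)"
proof -
  have "Min (range (phi_mixed \<phi>X \<phi>Y \<tau>)) = Min (range \<phi>Y) + measure_pmf.expectation \<tau> \<phi>X"
    and "Max (range (phi_mixed \<phi>X \<phi>Y \<tau>)) = Max (range \<phi>Y) + measure_pmf.expectation \<tau> \<phi>X" for \<tau>
    unfolding phi_mixed_eq by (simp_all add: Min_add_commute Max_add_commute)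
  \<comment> \<open>Both hypotheses on the extreme payoffs reduce to this inequality.\<close>
  with assms(3) have "lam * measure_pmf.expectation \<tau>m \<phi>X + Max (range \<phi>Y) \<le>
      lam * measure_pmf.expectation \<tau>p \<phi>X + Min (range \<phi>Y)"
    by (simp add: algebra_simps)
  then obtain p0 pstar L where "p0 \<in> {0..1}" and "\<forall>y. pstar y \<in> {0..1}"
    and "(1 - lam) * measure_pmf.expectation (mix p0 \<tau>p \<tau>m) \<phi>X + L = K"
    and "\<forall>y. lam * measure_pmf.expectation (mix (pstar y) \<tau>p \<tau>m) \<phi>X + \<phi>Y y = L"
    using ex_reactive_mix_weights[OF assms(1,2) _ assms(5,6)] by metis
  moreover from this have "autocratic (\<lambda>x y. \<phi>X x + \<phi>Y y - K) lam (reactive p0 pstar \<tau>p \<tau>m)"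
    by (intro autocratic_additiveI[where L = L]) (simp_all add: assms(1,2) reactive_def)
  ultimately show ?thesis
    by blast
qed

end
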